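(* (1) Every combinatorial $k$-parameter $\mathbf x=(k,S,\Lambda)$ is $\aleph_{k+1}$-free. (2) If $\mathbf x=(k,S,\Lambda,\mathbf a)$ is an abelian group $k$-parameter such that the combinatorial parameter $(k,S,\Lambda)$ is free, then $G_{\mathbf x}$ is a free abelian group.
   Context: For a set $S$, ${}^\omega S$ is the set of all functions $\omega\to S$. A combinatorial $k$-parameter is a triple $(k,S,\Lambda)$ with $k<\omega$, $S$ a set and $\Lambda\subseteq {}^{k+1}({}^\omega S)$ (sequences $\bar\eta=\langle\eta_0,\dots,\eta_k\rangle$, $\eta_\ell\in{}^\omega S$). An abelian group $k$-parameter is $\mathbf x=(k,S,\Lambda,\mathbf a)$ with $(k,S,\Lambda)$ a combinatorial $k$-parameter and $\mathbf a:\Lambda\times\omega\to\mathbb Z$, $\mathbf a_{\bar\eta,n}=\mathbf a(\bar\eta,n)$. For $\bar\eta\in\Lambda$, $m\le k$, $n<\omega$, $\bar\eta\upharpoonleft\langle m,n\rangle$ is the sequence obtained from $\bar\eta$ by replacing $\eta_m$ with $\eta_m\restriction n$. $\Lambda_m=\{\bar\eta\upharpoonleft\langle m,n\rangle:\bar\eta\in\Lambda,n<\omega\}$, $\Lambda_{\le k}=\bigcup_{m\le k}\Lambda_m$. $G_{\mathbf x}$ is the abelian group generated by $z$, $x_{\bar\nu}$ ($\bar\nu\in\Lambda_{\le k}$), $y_{\bar\eta,n}$ ($\bar\eta\in\Lambda,n<\omega$) freely except for the relations $(n!)y_{\bar\eta,n+1}=y_{\bar\eta,n}+\mathbf a_{\bar\eta,n}z+\sum_{m\le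 k}x_{\bar\eta\upharpoonleft\langle m,n\rangle}$ ($\bar\eta\in\Lambda$, $n<\omega$). A combinatorial $k$-parameter $(k,S,\Lambda)$ is free if there is an enumeration $\langle\bar\eta^\alpha:\alpha<\alpha( * )\rangle$ of $\Lambda$ such that for every $\alpha<\alpha( * )$ there are $m\le k$ and $n<\omega$ with $\bar\eta^\alpha\upharpoonleft\langle m,n\rangle\notin\{\bar\eta^\beta\upharpoonleft\langle m,n\rangle:\beta<\alpha\}$. It is $\theta$-free if $(k,S,\Lambda')$ is free for every $\Lambda'\subseteq\Lambda$ with $|\Lambda'|<\theta$. *)

theory Defs
  imports "HOL-Algebra.Free_Abelian_Groups" "HOL-Algebra.Coset"
begin

(* An element eta of ^omega S is a function nat => 's (with values in S).
   A (k+1)-tuple bar-eta is a list of length k+1 of such functions.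
   Coordinates of tuples of the form  bar-eta |` <m,n>  are either infinite
   sequences or finite sequences; both are encoded uniformly as
   nat => 's option: an infinite sequence eta as (%i. Some (eta i)), the finite
   sequence eta|n as (%i. if i < n then Some (eta i) else None).
   This encoding is injective and keeps finite and infinite sequences apart. *)

definition seq_full :: "(nat \<Rightarrow> 's) \<Rightarrow> (nat \<Rightarrow> 's option)" where
  "seq_full \<eta> = (\<lambda>i. Some (\<eta> i))"

definition seq_restr :: "(nat \<Rightarrow> 's) \<Rightarrow> nat \<Rightarrow> (nat \<Rightarrow> 's option)" where
  "seq_restr \<eta> n = (\<lambda>i. if i < n then Some (\<eta> i) else None)"

definition tup_restr :: "(nat \<Rightarrow> 's) list \<Rightarrow> nat \<Rightarrow> nat \<Rightarrow> (nat \<Rightarrow> 's option) list" where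
  "tup_restr \<eta>s m n =
     map (\<lambda>l. if l = m then seq_restr (\<eta>s ! l) n else seq_full (\<eta>s ! l)) [0..<length \<eta>s]"

definition comb_param :: "nat \<Rightarrow> 's set \<Rightarrow> (nat \<Rightarrow> 's) list set \<Rightarrow> bool" where
  "comb_param k S \<Lambda> \<longleftrightarrow>
     (\<forall>\<eta>s\<in>\<Lambda>. length \<eta>s = Suc k \<and> (\<forall>l<Suc k. \<forall>i. (\<eta>s ! l) i \<in> S))"

definition Lambda_m :: "(nat \<Rightarrow> 's) list set \<Rightarrow> nat \<Rightarrow> (nat \<Rightarrow> 's option) list set" where
  "Lambda_m \<Lambda> m = {tup_restr \<eta>s m n | \<eta>s n. \<eta>s \<in> \<Lambda>}"

definition Lambda_le :: "nat \<Rightarrow> (nat \<Rightarrow> 's) list set \<Rightarrow> (nat \<Rightarrow> 's option) list set" where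
  "Lambda_le k \<Lambda> = (\<Union>m\<in>{0..k}. Lambda_m \<Lambda> m)"

text \<open>Freeness: an enumeration of Lambda indexed by an ordinal is the same as a
  well-order r on Lambda; the elements enumerated before eta are those in
  underS r eta.\<close>
definition comb_free :: "nat \<Rightarrow> (nat \<Rightarrow> 's) list set \<Rightarrow> bool" where
  "comb_free k \<Lambda> \<longleftrightarrow>
     (\<exists>r. well_order_on \<Lambda> r \<and>
        (\<forall>\<eta>s\<in>\<Lambda>. \<exists>m\<le>k. \<exists>n.
           tup_restr \<eta>s m n \<notin> (\<lambda>\<nu>s. tup_restr \<nu>s m n) ` Order_Relation.underS r \<eta>s))"

text \<open>card_le_aleph k A  means  |A| <= aleph_k.\<close>
fun card_le_aleph :: "nat \<Rightarrow> 'a set \<Rightarrow> bool" where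
  "card_le_aleph 0 A = countable A"
| "card_le_aleph (Suc k) A =
     (\<exists>r. well_order_on A r \<and> (\<forall>a\<in>A. card_le_aleph k (Order_Relation.underS r a)))"

text \<open>theta-free for theta = aleph_{k+1}: every subset of cardinality < aleph_{k+1},
  i.e. of cardinality <= aleph_k, is free.\<close>
definition aleph_Suc_free :: "nat \<Rightarrow> (nat \<Rightarrow> 's) list set \<Rightarrow> bool" where
  "aleph_Suc_free k \<Lambda> \<longleftrightarrow>
     (\<forall>\<Lambda>'. \<Lambda>' \<subseteq> \<Lambda> \<and> card_le_aleph k \<Lambda>' \<longrightarrow> comb_free k \<Lambda>')"

datatype 's gen = GZ | GX "(nat \<Rightarrow> 's option) list" | GY "(nat \<Rightarrow> 's) list" nat

definition gens :: "nat \<Rightarrow> (nat \<Rightarrow> 's) list set \<Rightarrow> 's gen set" where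
  "gens k \<Lambda> = {GZ} \<union> GX ` Lambda_le k \<Lambda> \<union> {GY \<eta>s n | \<eta>s n. \<eta>s \<in> \<Lambda>}"

definition rel_elem :: "nat \<Rightarrow> ((nat \<Rightarrow> 's) list \<Rightarrow> nat \<Rightarrow> int) \<Rightarrow> (nat \<Rightarrow> 's) list \<Rightarrow> nat
    \<Rightarrow> ('s gen \<Rightarrow>\<^sub>0 int)" where
  "rel_elem k a \<eta>s n =
     frag_cmul (int (fact n)) (frag_of (GY \<eta>s (Suc n))) - frag_of (GY \<eta>s n)
     - frag_cmul (a \<eta>s n) (frag_of GZ) - (\<Sum>m\<in>{0..k}. frag_of (GX (tup_restr \<eta>s m n)))"

definition rels :: "nat \<Rightarrow> ((nat \<Rightarrow> 's) list \<Rightarrow> nat \<Rightarrow> int) \<Rightarrow> (nat \<Rightarrow> 's) list set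
    \<Rightarrow> ('s gen \<Rightarrow>\<^sub>0 int) set" where
  "rels k a \<Lambda> = {rel_elem k a \<eta>s n | \<eta>s n. \<eta>s \<in> \<Lambda>}"

definition G_x :: "nat \<Rightarrow> (nat \<Rightarrow> 's) list set \<Rightarrow> ((nat \<Rightarrow> 's) list \<Rightarrow> nat \<Rightarrow> int)
    \<Rightarrow> ('s gen \<Rightarrow>\<^sub>0 int) set monoid" where
  "G_x k \<Lambda> a = free_Abelian_group (gens k \<Lambda>)
     Mod (generate (free_Abelian_group (gens k \<Lambda>)) (rels k a \<Lambda>))"

text \<open>A group is free abelian iff it is isomorphic to the free abelian group on some set
  (a basis of cardinality at most that of the carrier suffices, so taking the basis set in
  the carrier's element type loses nothing).\<close>
definition free_abelian :: "('a, 'm) monoid_scheme \<Rightarrow> bool" where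
  "free_abelian G \<longleftrightarrow> (\<exists>B :: 'a set. G \<cong> free_Abelian_group B)"

end

theory Submission
  imports Defs
begin

text \<open>
  (1) By induction on \<open>j\<close> we prove more: a set \<open>\<Lambda>\<close> of at most \<open>\<aleph>\<^sub>j\<close> tuples is free even
  if the coordinate at which a tuple \<open>\<eta>\<close> becomes new has to be taken from a prescribed set
  \<open>F \<eta>\<close> of more than \<open>j\<close> coordinates. A countable \<open>\<Lambda>\<close> is enumerated with finite initial
  segments; as two distinct tuples have distinct \<open>m\<close>-restrictions of all large lengths, any
  coordinate works. If \<open>|\<Lambda>| \<le> \<aleph>\<^sub>j\<^sub>+\<^sub>1\<close>, well-order \<open>\<Lambda>\<close> with initial segments of size
  \<open>\<le> \<aleph>\<^sub>j\<close>, and let the key of \<open>\<eta>\<close> be the last of the first tuples in which the coordinates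
  of \<open>\<eta>\<close> occur, attained at the coordinate \<open>lc \<eta>\<close>. The tuples with a given key are built from
  coordinates of an initial segment, so there are at most \<open>\<aleph>\<^sub>j\<close> of them, and by induction
  they are free with \<open>lc \<eta>\<close> removed from \<open>F \<eta>\<close>. Listing these blocks in the order of their
  keys preserves newness: a tuple with the same \<open>m\<close>-restriction as \<open>\<eta>\<close>, \<open>m \<noteq> lc \<eta>\<close>, shares
  the coordinate \<open>lc \<eta>\<close> with \<open>\<eta>\<close> and therefore has a key not below that of \<open>\<eta>\<close>.

  (2) If \<open>\<eta>\<close> is new at coordinate \<open>m0 \<eta>\<close> from length \<open>n0 \<eta>\<close> on, the relation indexed by
  \<open>(\<eta>, n)\<close> can be solved, with coefficient \<open>-1\<close>, for \<open>y\<^sub>\<eta>\<^sub>,\<^sub>n\<close> if \<open>n < n0 \<eta>\<close> and for the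
  generator \<open>x\<close> of \<open>tup_restr \<eta> (m0 \<eta>) n\<close> otherwise. None of these pivots occurs in a relation
  that comes earlier in a suitable well-founded order, so the relations are triangular and
  \<open>G\<^sub>x\<close> is free on the generators that are not pivots.
\<close>

section \<open>Quotients of free Abelian groups by triangular relations\<close>

lemma (in normal) FactGroup_iso_complement:
  assumes K: "subgroup K G" and trivial: "K \<inter> H \<subseteq> {\<one>}"
    and cover: "\<And>g. g \<in> carrier G \<Longrightarrow> \<exists>x\<in>K. g \<otimes> inv x \<in> H"
  shows "G\<lparr>carrier := K\<rparr> \<cong> G Mod H"
proof -
  have KG: "x \<in> carrier G" if "x \<in> K" for x
    using subgroup.subset[OF K] that by blast
  have hom: "(#>) H \<in> hom (G\<lparr>carrier := K\<rparr>) (G Mod H)"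
    using r_coset_hom_Mod by (auto simp: hom_def KG)
  have "inj_on ((#>) H) K"
  proof (rule inj_onI)
    fix x y assume x: "x \<in> K" and y: "y \<in> K" and eq: "H #> x = H #> y"
    have "x \<in> H #> y"
      using rcos_self[OF KG[OF x] subgroup_axioms] eq by simp
    then have "x \<otimes> inv y \<in> H"
      by (rule rcos_module_imp[OF is_group KG[OF y]])
    moreover have "x \<otimes> inv y \<in> K"
      using x y K by (simp add: subgroup.m_closed subgroup.m_inv_closed)
    ultimately have "x \<otimes> inv y = \<one>"
      using trivial by blast
    then show "x = y"
      using KG x y by (metis inv_closed inv_equality inv_inv)
  qed
  moreover have "H #> g \<in> (#>) H ` K" if g: "g \<in> carrier G" for g
  proof -
    obtain x where x: "x \<in> K" "g \<otimes> inv x \<in> H"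
      using cover[OF g] by blast
    then have "g \<in> H #> x"
      by (intro rcos_module_rev[OF is_group KG g])
    then have "H #> g = H #> x"
      using repr_independence[OF _ KG[OF x(1)] subgroup_axioms] by simp
    then show ?thesis
      using x(1) by blast
  qed
  then have "(#>) H ` K = carrier (G Mod H)"
    using KG by (auto simp: carrier_FactGroup)
  ultimately show ?thesis
    using hom by (auto simp: is_iso_def iso_def bij_betw_def)
qed

lemma subgroup_carrier_free_Abelian_group:
  assumes "Y \<subseteq> X"
  shows "subgroup (carrier (free_Abelian_group Y)) (free_Abelian_group X)"
proof (rule group.subgroupI)
  fix a :: "'a \<Rightarrow>\<^sub>0 int" assume "a \<in> carrier (free_Abelian_group Y)"
  moreover from this have "inv\<^bsub>free_Abelian_group X\<^esub> a = - a"
    using assms by (intro inv_free_Abelian_group) auto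
  ultimately show "inv\<^bsub>free_Abelian_group X\<^esub> a \<in> carrier (free_Abelian_group Y)"
    by simp
next
  have "0 \<in> carrier (free_Abelian_group Y)"
    by simp
  then show "carrier (free_Abelian_group Y) \<noteq> {}"
    by blast
qed (use assms in \<open>auto dest: subsetD[OF keys_add]\<close>)

lemma free_Abelian_group_Mod_iso_complement:
  assumes N: "subgroup N (free_Abelian_group X)" and "Y \<subseteq> X"
    and trivial: "\<And>a. a \<in> N \<Longrightarrow> Poly_Mapping.keys a \<subseteq> Y \<Longrightarrow> a = 0"
    and cover: "\<And>w. Poly_Mapping.keys w \<subseteq> X \<Longrightarrow> \<exists>v. Poly_Mapping.keys v \<subseteq> Y \<and> w - v \<in> N"
  shows "free_Abelian_group X Mod N \<cong> free_Abelian_group Y"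
proof -
  let ?F = "free_Abelian_group X" and ?K = "carrier (free_Abelian_group Y)"
  interpret F: comm_group ?F
    by (rule abelian_free_Abelian_group)
  interpret N: normal N ?F
    by (rule F.subgroup_imp_normal[OF N])
  have "?F\<lparr>carrier := ?K\<rparr> \<cong> ?F Mod N"
  proof (rule N.FactGroup_iso_complement)
    show "subgroup ?K ?F"
      using \<open>Y \<subseteq> X\<close> by (rule subgroup_carrier_free_Abelian_group)
    show "?K \<inter> N \<subseteq> {\<one>\<^bsub>?F\<^esub>}"
    proof
      fix a assume "a \<in> ?K \<inter> N"
      then show "a \<in> {\<one>\<^bsub>?F\<^esub>}"
        using trivial by simp
    qed
  next
    fix g assume "g \<in> carrier ?F"
    then have "Poly_Mapping.keys g \<subseteq> X"
      by simp
    from cover[OF this] obtain v where v: "Poly_Mapping.keys v \<subseteq> Y" "g - v \<in> N"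
      by blast
    have "inv\<^bsub>?F\<^esub> v = - v"
      using v(1) \<open>Y \<subseteq> X\<close> by (intro inv_free_Abelian_group) auto
    then have "g \<otimes>\<^bsub>?F\<^esub> inv\<^bsub>?F\<^esub> v \<in> N"
      using v(2) by simp
    moreover have "v \<in> ?K"
      using v(1) by simp
    ultimately show "\<exists>x\<in>?K. g \<otimes>\<^bsub>?F\<^esub> inv\<^bsub>?F\<^esub> x \<in> N"
      by blast
  qed
  moreover have "?F\<lparr>carrier := ?K\<rparr> = free_Abelian_group Y"
    by (simp add: free_Abelian_group_def)
  ultimately have "free_Abelian_group Y \<cong> ?F Mod N"
    by simp
  then show ?thesis
    by (rule group.iso_sym[OF group_free_Abelian_group])
qed

definition frag_span :: "('i \<Rightarrow> 'x \<Rightarrow>\<^sub>0 int) \<Rightarrow> 'i set \<Rightarrow> ('x \<Rightarrow>\<^sub>0 int) set" where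
  "frag_span rel I = frag_extend rel ` {c. Poly_Mapping.keys c \<subseteq> I}"

lemma zero_in_frag_span: "0 \<in> frag_span rel I"
  unfolding frag_span_def by (rule image_eqI[of _ _ 0]) auto

lemma rel_in_frag_span: "i \<in> I \<Longrightarrow> rel i \<in> frag_span rel I"
  unfolding frag_span_def by (rule image_eqI[of _ _ "frag_of i"]) auto

lemma diff_in_frag_span:
  assumes "a \<in> frag_span rel I" "b \<in> frag_span rel I"
  shows "a - b \<in> frag_span rel I"
proof -
  obtain c d where "Poly_Mapping.keys c \<subseteq> I" "a = frag_extend rel c"
    "Poly_Mapping.keys d \<subseteq> I" "b = frag_extend rel d"
    using assms by (auto simp: frag_span_def)
  then show ?thesis
    unfolding frag_span_def
    by (intro image_eqI[of _ _ "c - d"]) (auto simp: frag_extend_diff dest: subsetD[OF keys_diff])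
qed

lemma cmul_in_frag_span: "a \<in> frag_span rel I \<Longrightarrow> frag_cmul u a \<in> frag_span rel I"
  by (rule frag_closure_minus_cmul) (auto intro: zero_in_frag_span diff_in_frag_span)

lemma generate_free_Abelian_group_subset_frag_span:
  assumes keys_rel: "\<And>i. i \<in> I \<Longrightarrow> Poly_Mapping.keys (rel i) \<subseteq> X"
  shows "generate (free_Abelian_group X) (rel ` I) \<subseteq> frag_span rel I"
proof
  fix a assume "a \<in> generate (free_Abelian_group X) (rel ` I)"
  then show "a \<in> frag_span rel I"
  proof (induction rule: generate.induct)
    case (inv h)
    then obtain i where "i \<in> I" "h = rel i"
      by blast
    moreover from this have "0 - rel i \<in> frag_span rel I"
      by (intro diff_in_frag_span zero_in_frag_span rel_in_frag_span)
    ultimately show ?case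
      using keys_rel by simp
  next
    case (eng a b)
    then have "a - (0 - b) \<in> frag_span rel I"
      by (intro diff_in_frag_span zero_in_frag_span)
    then show ?case
      by simp
  qed (auto intro: zero_in_frag_span rel_in_frag_span)
qed

lemma frag_span_subset_generate_free_Abelian_group:
  assumes keys_rel: "\<And>i. i \<in> I \<Longrightarrow> Poly_Mapping.keys (rel i) \<subseteq> X"
  shows "frag_span rel I \<subseteq> generate (free_Abelian_group X) (rel ` I)"
proof (clarsimp simp: frag_span_def)
  let ?F = "free_Abelian_group X"
  interpret F: group ?F
    by simp
  have sub: "subgroup (generate ?F (rel ` I)) ?F"
    using keys_rel by (intro F.generate_is_subgroup) auto
  fix c :: "'a \<Rightarrow>\<^sub>0 int" assume "Poly_Mapping.keys c \<subseteq> I"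
  then show "frag_extend rel c \<in> generate ?F (rel ` I)"
  proof (induction c rule: frag_induction)
    case zero
    then show ?case
      using generate.one[of ?F] by simp
  next
    case (one i)
    then show ?case
      by (auto intro: generate.incl)
  next
    case (diff a b)
    have "frag_extend rel b \<in> carrier ?F"
      using subgroup.subset[OF sub] diff.IH(2) by blast
    then have "frag_extend rel a \<otimes>\<^bsub>?F\<^esub> inv\<^bsub>?F\<^esub> frag_extend rel b = frag_extend rel (a - b)"
      by (simp add: frag_extend_diff)
    then show ?case
      using diff.IH sub by (metis subgroup.m_closed subgroup.m_inv_closed)
  qed
qed

lemma generate_free_Abelian_group_eq_frag_span:
  "(\<And>i. i \<in> I \<Longrightarrow> Poly_Mapping.keys (rel i) \<subseteq> X) \<Longrightarrow>
    generate (free_Abelian_group X) (rel ` I) = frag_span rel I"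
  by (intro equalityI generate_free_Abelian_group_subset_frag_span
      frag_span_subset_generate_free_Abelian_group)

lemma frag_congruent_to_support:
  assumes "Poly_Mapping.keys w \<subseteq> K" and "0 \<in> M" and "\<And>a b. a \<in> M \<Longrightarrow> b \<in> M \<Longrightarrow> a - b \<in> M"
    and "\<And>x. x \<in> K \<Longrightarrow> \<exists>v. Poly_Mapping.keys v \<subseteq> Y \<and> frag_of x - v \<in> M"
  shows "\<exists>v. Poly_Mapping.keys v \<subseteq> Y \<and> w - v \<in> M"
  using assms(1)
proof (induction w rule: frag_induction)
  case zero
  then show ?case
    using assms(2) by (intro exI[of _ 0]) simp
next
  case (one x)
  then show ?case
    using assms(4) by blast
next
  case (diff a b)
  then obtain va vb where "Poly_Mapping.keys va \<subseteq> Y" "a - va \<in> M" "Poly_Mapping.keys vb \<subseteq> Y" "b - vb \<in> M"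
    by blast
  moreover have "a - b - (va - vb) = (a - va) - (b - vb)"
    by simp
  ultimately show ?case
    using assms(3) keys_diff[of va vb] by (intro exI[of _ "va - vb"]) (metis Un_least order_trans)
qed

lemma wf_finite_has_maximal:
  assumes "wf R" "finite K" "K \<noteq> {}"
  shows "\<exists>i\<in>K. \<forall>j\<in>K. (i, j) \<notin> R"
proof -
  have "acyclic (R \<inter> K \<times> K)"
    using wf_acyclic[OF assms(1)] acyclic_subset by blast
  then have "wf ((R \<inter> K \<times> K)\<inverse>)"
    using assms(2) by (intro finite_acyclic_wf_converse) auto
  then obtain i where "i \<in> K" "\<And>j. (j, i) \<in> (R \<inter> K \<times> K)\<inverse> \<Longrightarrow> j \<notin> K"
    using wfE_min assms(3) by (metis ex_in_conv)
  then show ?thesis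
    by blast
qed

locale triangular_relations =
  fixes X :: "'x set" and I :: "'i set" and rel :: "'i \<Rightarrow> 'x \<Rightarrow>\<^sub>0 int"
    and pivot :: "'i \<Rightarrow> 'x" and R :: "'i rel"
  assumes keys_rel: "\<And>i. i \<in> I \<Longrightarrow> Poly_Mapping.keys (rel i) \<subseteq> X"
    and unit_pivot: "\<And>i. i \<in> I \<Longrightarrow> is_unit (poly_mapping.lookup (rel i) (pivot i))"
    and wf: "wf R"
    and triangular: "\<And>i j. \<lbrakk>i \<in> I; j \<in> I; pivot j \<in> Poly_Mapping.keys (rel i); j \<noteq> i\<rbrakk> \<Longrightarrow> (j, i) \<in> R"
begin

lemma pivot_in_keys_frag_extend:
  assumes c: "Poly_Mapping.keys c \<subseteq> I" and "c \<noteq> 0"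
  shows "\<exists>i\<in>Poly_Mapping.keys c. pivot i \<in> Poly_Mapping.keys (frag_extend rel c)"
proof -
  obtain i where i: "i \<in> Poly_Mapping.keys c" and max: "\<And>j. j \<in> Poly_Mapping.keys c \<Longrightarrow> (i, j) \<notin> R"
    using wf_finite_has_maximal[OF wf finite_keys, of c] \<open>c \<noteq> 0\<close> by (metis keys_eq_empty)
  have pivot_not_in_other: "poly_mapping.lookup c j * poly_mapping.lookup (rel j) (pivot i) = 0"
    if "j \<in> Poly_Mapping.keys c - {i}" for j
  proof -
    have "pivot i \<notin> Poly_Mapping.keys (rel j)"
      using triangular[of j i] max[of j] i c that by blast
    then show ?thesis
      by (simp add: in_keys_iff)
  qed
  have "poly_mapping.lookup (frag_extend rel c) (pivot i)
      = (\<Sum>j\<in>Poly_Mapping.keys c. poly_mapping.lookup c j * poly_mapping.lookup (rel j) (pivot i))"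
    by (simp add: frag_extend_def lookup_sum)
  also have "\<dots> = poly_mapping.lookup c i * poly_mapping.lookup (rel i) (pivot i)"
    using pivot_not_in_other by (simp add: sum.remove[OF finite_keys i] sum.neutral)
  also have "\<dots> \<noteq> 0"
    using i c unit_pivot[of i] by (auto simp: in_keys_iff)
  finally show ?thesis
    using i by (auto simp: in_keys_iff)
qed

lemma frag_span_eq_0_if_no_pivot:
  assumes "a \<in> frag_span rel I" and "Poly_Mapping.keys a \<inter> pivot ` I = {}"
  shows "a = 0"
proof -
  obtain c where c: "Poly_Mapping.keys c \<subseteq> I" "a = frag_extend rel c"
    using assms(1) by (auto simp: frag_span_def)
  have "c = 0"
  proof (rule ccontr)
    assume "c \<noteq> 0"
    then obtain i where "i \<in> Poly_Mapping.keys c" "pivot i \<in> Poly_Mapping.keys a"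
      using pivot_in_keys_frag_extend[OF c(1)] c(2) by blast
    then show False
      using assms(2) c(1) by blast
  qed
  then show ?thesis
    using c(2) by simp
qed

lemma non_pivot_congruent:
  "x \<in> X - pivot ` I \<Longrightarrow> \<exists>v. Poly_Mapping.keys v \<subseteq> X - pivot ` I \<and> frag_of x - v \<in> frag_span rel I"
  using zero_in_frag_span by (intro exI[of _ "frag_of x"]) auto

lemma pivot_congruent_to_non_pivots:
  "i \<in> I \<Longrightarrow> \<exists>v. Poly_Mapping.keys v \<subseteq> X - pivot ` I \<and> frag_of (pivot i) - v \<in> frag_span rel I"
  using wf
proof (induction i rule: wf_induct_rule)
  case (less i)
  define u where "u = poly_mapping.lookup (rel i) (pivot i)"
  have "u dvd 1"
    using unit_pivot[OF less.prems] by (simp only: u_def)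
  then obtain u' where u': "u' * u = 1"
    by (metis dvdE mult.commute)
  define rest where "rest = rel i - frag_cmul u (frag_of (pivot i))"
  have keys_rest: "Poly_Mapping.keys rest \<subseteq> Poly_Mapping.keys (rel i) - {pivot i}"
    by (auto simp: rest_def u_def in_keys_iff lookup_minus split: if_splits)
  have other_keys: "\<exists>v. Poly_Mapping.keys v \<subseteq> X - pivot ` I \<and> frag_of x - v \<in> frag_span rel I"
    if x: "x \<in> Poly_Mapping.keys (rel i) - {pivot i}" for x
  proof (cases "x \<in> pivot ` I")
    case True
    then obtain j where j: "j \<in> I" "x = pivot j"
      by blast
    then have "(j, i) \<in> R"
      using triangular[OF less.prems j(1)] x by blast
    then show ?thesis
      using less.IH j by blast
  next
    case False
    then show ?thesis
      using x keys_rel[OF less.prems] by (intro non_pivot_congruent) blast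
  qed
  obtain v where v: "Poly_Mapping.keys v \<subseteq> X - pivot ` I" "rest - v \<in> frag_span rel I"
    using frag_congruent_to_support[OF keys_rest zero_in_frag_span diff_in_frag_span other_keys] by blast
  have "frag_of (pivot i) - frag_cmul (- u') v = frag_cmul u' (rel i) - frag_cmul u' (rest - v)"
    by (rule poly_mapping_eqI) (simp add: rest_def lookup_minus right_diff_distrib mult.assoc[symmetric] u')
  also have "\<dots> \<in> frag_span rel I"
    by (rule diff_in_frag_span[OF cmul_in_frag_span[OF rel_in_frag_span[OF less.prems]]
          cmul_in_frag_span[OF v(2)]])
  finally show ?case
    using v(1) by (intro exI[of _ "frag_cmul (- u') v"]) auto
qed

lemma congruent_to_non_pivots:
  assumes "Poly_Mapping.keys w \<subseteq> X"
  shows "\<exists>v. Poly_Mapping.keys v \<subseteq> X - pivot ` I \<and> w - v \<in> frag_span rel I"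
  using assms zero_in_frag_span diff_in_frag_span
proof (rule frag_congruent_to_support)
  fix x assume "x \<in> X"
  show "\<exists>v. Poly_Mapping.keys v \<subseteq> X - pivot ` I \<and> frag_of x - v \<in> frag_span rel I"
  proof (cases "x \<in> pivot ` I")
    case True
    then show ?thesis
      using pivot_congruent_to_non_pivots by blast
  next
    case False
    then show ?thesis
      using \<open>x \<in> X\<close> by (intro non_pivot_congruent) blast
  qed
qed

theorem quotient_iso_free_Abelian_group:
  "free_Abelian_group X Mod generate (free_Abelian_group X) (rel ` I) \<cong> free_Abelian_group (X - pivot ` I)"
proof (rule free_Abelian_group_Mod_iso_complement)
  show "subgroup (generate (free_Abelian_group X) (rel ` I)) (free_Abelian_group X)"
    using keys_rel by (intro group.generate_is_subgroup) auto
  note span = generate_free_Abelian_group_eq_frag_span[OF keys_rel]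
  show "a = 0" if "a \<in> generate (free_Abelian_group X) (rel ` I)" "Poly_Mapping.keys a \<subseteq> X - pivot ` I"
    for a
    using that by (intro frag_span_eq_0_if_no_pivot) (auto simp: span)
  show "\<exists>v. Poly_Mapping.keys v \<subseteq> X - pivot ` I \<and> w - v \<in> generate (free_Abelian_group X) (rel ` I)"
    if "Poly_Mapping.keys w \<subseteq> X" for w
    using congruent_to_non_pivots[OF that] by (simp add: span)
qed auto

end

lemma length_tup_restr [simp]: "length (tup_restr \<eta>s m n) = length \<eta>s"
  by (simp add: tup_restr_def)

lemma nth_tup_restr:
  "l < length \<eta>s \<Longrightarrow>
    tup_restr \<eta>s m n ! l = (if l = m then seq_restr (\<eta>s ! l) n else seq_full (\<eta>s ! l))"
  by (simp add: tup_restr_def)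

lemma seq_restr_eq_iff: "seq_restr a n = seq_restr b n' \<longleftrightarrow> n = n' \<and> (\<forall>i<n. a i = b i)"
proof
  assume eq: "seq_restr a n = seq_restr b n'"
  have "n = n'"
  proof (rule linorder_cases[of n n'])
    assume "n < n'"
    then show ?thesis using fun_cong[OF eq, of n] by (simp add: seq_restr_def)
  next
    assume "n' < n"
    then show ?thesis using fun_cong[OF eq, of n'] by (simp add: seq_restr_def)
  qed
  with eq show "n = n' \<and> (\<forall>i<n. a i = b i)"
    by (auto simp: seq_restr_def fun_eq_iff split: if_splits)
qed (auto simp: seq_restr_def fun_eq_iff)

lemma seq_restr_ne_seq_full [simp]: "seq_restr a n \<noteq> seq_full b"
  by (auto simp: seq_restr_def seq_full_def fun_eq_iff intro!: exI[of _ n])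

lemma seq_full_eq_iff [simp]: "seq_full a = seq_full b \<longleftrightarrow> a = b"
  by (auto simp: seq_full_def fun_eq_iff)

lemma tup_restr_eqD:
  assumes eq: "tup_restr \<eta>s m n = tup_restr \<nu>s m' n'" and m: "m < length \<eta>s"
  shows "m' = m \<and> n' = n"
proof -
  have "length \<nu>s = length \<eta>s"
    using arg_cong[OF eq, of length] by simp
  moreover have "tup_restr \<eta>s m n ! m = tup_restr \<nu>s m' n' ! m"
    using eq by simp
  ultimately show ?thesis
    using m by (auto simp: nth_tup_restr seq_restr_eq_iff split: if_splits)
qed

lemma tup_restr_eq_shorter:
  assumes eq: "tup_restr \<eta>s m n' = tup_restr \<nu>s m n'" and "n \<le> n'"
  shows "tup_restr \<eta>s m n = tup_restr \<nu>s m n"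
proof (rule nth_equalityI)
  show len: "length (tup_restr \<eta>s m n) = length (tup_restr \<nu>s m n)"
    using arg_cong[OF eq, of length] by simp
  fix l assume "l < length (tup_restr \<eta>s m n)"
  moreover have "tup_restr \<eta>s m n' ! l = tup_restr \<nu>s m n' ! l"
    using eq by simp
  ultimately show "tup_restr \<eta>s m n ! l = tup_restr \<nu>s m n ! l"
    using len \<open>n \<le> n'\<close> by (auto simp: nth_tup_restr seq_restr_eq_iff)
qed

lemma nth_eq_if_tup_restr_eq:
  assumes eq: "tup_restr \<nu>s m n = tup_restr \<eta>s m n" and "l \<noteq> m" "l < length \<eta>s"
  shows "\<nu>s ! l = \<eta>s ! l"
proof -
  have "length \<nu>s = length \<eta>s"
    using arg_cong[OF eq, of length] by simp
  moreover have "tup_restr \<nu>s m n ! l = tup_restr \<eta>s m n ! l"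
    using eq by simp
  ultimately show ?thesis
    using assms(2,3) by (simp add: nth_tup_restr)
qed

lemma lookup_rel_elem:
  "poly_mapping.lookup (rel_elem k a \<eta>s n) g =
     int (fact n) * (if g = GY \<eta>s (Suc n) then 1 else 0) - (if g = GY \<eta>s n then 1 else 0)
     - a \<eta>s n * (if g = GZ then 1 else 0) - (\<Sum>m\<in>{0..k}. if g = GX (tup_restr \<eta>s m n) then 1 else 0)"
  by (simp add: rel_elem_def lookup_minus lookup_sum)

lemma keys_rel_elem:
  "Poly_Mapping.keys (rel_elem k a \<eta>s n) \<subseteq>
     {GY \<eta>s (Suc n), GY \<eta>s n, GZ} \<union> (\<lambda>m. GX (tup_restr \<eta>s m n)) ` {0..k}"
proof
  fix g assume g: "g \<in> Poly_Mapping.keys (rel_elem k a \<eta>s n)"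
  show "g \<in> {GY \<eta>s (Suc n), GY \<eta>s n, GZ} \<union> (\<lambda>m. GX (tup_restr \<eta>s m n)) ` {0..k}"
  proof (rule ccontr)
    assume "g \<notin> {GY \<eta>s (Suc n), GY \<eta>s n, GZ} \<union> (\<lambda>m. GX (tup_restr \<eta>s m n)) ` {0..k}"
    then have "poly_mapping.lookup (rel_elem k a \<eta>s n) g = 0"
      unfolding lookup_rel_elem by (auto intro!: sum.neutral)
    with g show False by (simp add: in_keys_iff)
  qed
qed

section \<open>Freeness of \<open>G\<^sub>x\<close>\<close>

locale free_enumeration =
  fixes k :: nat and \<Lambda> :: "(nat \<Rightarrow> 's) list set" and r :: "(nat \<Rightarrow> 's) list rel"
    and m0 n0 :: "(nat \<Rightarrow> 's) list \<Rightarrow> nat"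
  assumes length_eq: "\<And>\<eta>. \<eta> \<in> \<Lambda> \<Longrightarrow> length \<eta> = Suc k"
    and well_order: "well_order_on \<Lambda> r"
    and m0_le: "\<And>\<eta>. \<eta> \<in> \<Lambda> \<Longrightarrow> m0 \<eta> \<le> k"
    and new_restr: "\<And>\<eta>. \<eta> \<in> \<Lambda> \<Longrightarrow>
      tup_restr \<eta> (m0 \<eta>) (n0 \<eta>) \<notin> (\<lambda>\<nu>. tup_restr \<nu> (m0 \<eta>) (n0 \<eta>)) ` underS r \<eta>"
begin

lemma new_restr_precedes:
  assumes "\<eta> \<in> \<Lambda>" "\<eta>' \<in> \<Lambda>" "\<eta>' \<noteq> \<eta>" "n0 \<eta>' \<le> n" "m \<le> k"
    and eq: "tup_restr \<eta>' (m0 \<eta>') n = tup_restr \<eta> m n'"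
  shows "(\<eta>', \<eta>) \<in> r"
proof (rule ccontr)
  assume "(\<eta>', \<eta>) \<notin> r"
  then have "\<eta> \<in> underS r \<eta>'"
    using well_order assms(1-3)
    by (auto simp: underS_def well_order_on_def linear_order_on_def total_on_def)
  have "m0 \<eta>' = m \<and> n = n'"
    using tup_restr_eqD[OF eq[symmetric]] length_eq[OF assms(1)] \<open>m \<le> k\<close> by simp
  then have "tup_restr \<eta>' (m0 \<eta>') (n0 \<eta>') = tup_restr \<eta> (m0 \<eta>') (n0 \<eta>')"
    using tup_restr_eq_shorter eq \<open>n0 \<eta>' \<le> n\<close> by metis
  with new_restr[OF assms(2)] \<open>\<eta> \<in> underS r \<eta>'\<close> show False
    by (metis image_eqI)
qed

definition pivot :: "(nat \<Rightarrow> 's) list \<times> nat \<Rightarrow> 's gen" where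
  "pivot = (\<lambda>(\<eta>, n). if n0 \<eta> \<le> n then GX (tup_restr \<eta> (m0 \<eta>) n) else GY \<eta> n)"

text \<open>For \<open>n + 1 < n0 \<eta>\<close> the relation \<open>(\<eta>, n)\<close> contains the pivot \<open>y\<^sub>\<eta>\<^sub>,\<^sub>n\<^sub>+\<^sub>1\<close> of
  \<open>(\<eta>, n + 1)\<close>, so along a tuple the order counts down towards \<open>n0 \<eta>\<close>.\<close>

definition elim_order :: "((nat \<Rightarrow> 's) list \<times> nat) rel" where
  "elim_order = inv_image ((r - Id) <*lex*> less_than) (\<lambda>(\<eta>, n). (\<eta>, n0 \<eta> - n))"

lemma GX_in_gens:
  assumes "\<eta> \<in> \<Lambda>" "m \<le> k"
  shows "GX (tup_restr \<eta> m n) \<in> gens k \<Lambda>"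
proof -
  have "tup_restr \<eta> m n \<in> Lambda_m \<Lambda> m"
    using assms(1) by (auto simp: Lambda_m_def)
  then have "tup_restr \<eta> m n \<in> Lambda_le k \<Lambda>"
    using assms(2) unfolding Lambda_le_def by (intro UN_I[of m]) auto
  then show ?thesis
    by (simp add: gens_def)
qed

lemma keys_rel_elem_gens: "\<eta> \<in> \<Lambda> \<Longrightarrow> Poly_Mapping.keys (rel_elem k a \<eta> n) \<subseteq> gens k \<Lambda>"
  using keys_rel_elem[of k a \<eta> n] GX_in_gens by (auto simp: gens_def)

lemma lookup_rel_elem_pivot:
  assumes "\<eta> \<in> \<Lambda>"
  shows "poly_mapping.lookup (rel_elem k a \<eta> n) (pivot (\<eta>, n)) = -1"
proof (cases "n0 \<eta> \<le> n")
  case True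
  have "tup_restr \<eta> (m0 \<eta>) n = tup_restr \<eta> m n \<longleftrightarrow> m = m0 \<eta>" if "m \<in> {0..k}" for m
    using tup_restr_eqD[of \<eta> m n \<eta> "m0 \<eta>" n] length_eq[OF assms] that by auto
  then have "(\<Sum>m\<in>{0..k}. if GX (tup_restr \<eta> (m0 \<eta>) n) = GX (tup_restr \<eta> m n) then 1 else 0)
      = (\<Sum>m\<in>{0..k}. if m = m0 \<eta> then 1 else (0::int))"
    by (intro sum.cong) auto
  with True m0_le[OF assms] show ?thesis
    by (simp add: pivot_def lookup_rel_elem)
qed (simp add: pivot_def lookup_rel_elem)

lemma pivot_triangular:
  assumes "\<eta> \<in> \<Lambda>" "\<eta>' \<in> \<Lambda>" and key: "pivot (\<eta>', n') \<in> Poly_Mapping.keys (rel_elem k a \<eta> n)"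
    and "(\<eta>', n') \<noteq> (\<eta>, n)"
  shows "((\<eta>', n'), (\<eta>, n)) \<in> elim_order"
proof (cases "n0 \<eta>' \<le> n'")
  case True
  then obtain m where m: "m \<le> k" "tup_restr \<eta>' (m0 \<eta>') n' = tup_restr \<eta> m n"
    using key keys_rel_elem[of k a \<eta> n] by (auto simp: pivot_def)
  then have "n' = n"
    using tup_restr_eqD[OF m(2)] length_eq[OF assms(2)] m0_le[OF assms(2)] by simp
  then have "\<eta>' \<noteq> \<eta>"
    using assms(4) by blast
  then show ?thesis
    using new_restr_precedes[OF assms(1,2) _ True m] by (simp add: elim_order_def)
next
  case False
  then have "\<eta>' = \<eta> \<and> n' = Suc n"
    using key keys_rel_elem[of k a \<eta> n] assms(4) by (auto simp: pivot_def)
  with False show ?thesis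
    by (simp add: elim_order_def)
qed

theorem G_x_iso_free_Abelian_group:
  "G_x k \<Lambda> a \<cong> free_Abelian_group (gens k \<Lambda> - pivot ` (\<Lambda> \<times> UNIV))"
proof -
  interpret triangular_relations "gens k \<Lambda>" "\<Lambda> \<times> UNIV" "\<lambda>(\<eta>, n). rel_elem k a \<eta> n" pivot elim_order
  proof
    fix i assume "i \<in> \<Lambda> \<times> (UNIV :: nat set)"
    then show "Poly_Mapping.keys ((\<lambda>(\<eta>, n). rel_elem k a \<eta> n) i) \<subseteq> gens k \<Lambda>"
      using keys_rel_elem_gens by auto
  next
    show "wf elim_order"
      using well_order by (auto simp: elim_order_def well_order_on_def)
  qed (auto simp: keys_rel_elem_gens lookup_rel_elem_pivot intro: pivot_triangular)
  have "rels k a \<Lambda> = (\<lambda>(\<eta>, n). rel_elem k a \<eta> n) ` (\<Lambda> \<times> UNIV)"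
    by (auto simp: rels_def)
  then show ?thesis
    using quotient_iso_free_Abelian_group by (simp add: G_x_def)
qed

end

theorem free_abelian_G_x:
  assumes length_eq: "\<And>\<eta>. \<eta> \<in> \<Lambda> \<Longrightarrow> length \<eta> = Suc k" and "comb_free k \<Lambda>"
  shows "free_abelian (G_x k \<Lambda> a)"
proof -
  obtain r where wo: "well_order_on \<Lambda> r" and "\<forall>\<eta>\<in>\<Lambda>. \<exists>m\<le>k. \<exists>n.
      tup_restr \<eta> m n \<notin> (\<lambda>\<nu>. tup_restr \<nu> m n) ` underS r \<eta>"
    using \<open>comb_free k \<Lambda>\<close> by (auto simp: comb_free_def)
  then obtain m0 n0 where "\<And>\<eta>. \<eta> \<in> \<Lambda> \<Longrightarrow> m0 \<eta> \<le> k"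
    and "\<And>\<eta>. \<eta> \<in> \<Lambda> \<Longrightarrow> tup_restr \<eta> (m0 \<eta>) (n0 \<eta>) \<notin> (\<lambda>\<nu>. tup_restr \<nu> (m0 \<eta>) (n0 \<eta>)) ` underS r \<eta>"
    by metis
  with length_eq wo interpret free_enumeration k \<Lambda> r m0 n0
    by unfold_locales
  let ?B = "gens k \<Lambda> - pivot ` (\<Lambda> \<times> UNIV)"
  have "G_x k \<Lambda> a \<cong> free_Abelian_group ?B"
    by (rule G_x_iso_free_Abelian_group)
  \<comment> \<open>\<open>free_abelian\<close> wants a basis in the element type of the carrier, i.e. a set of cosets\<close>
  also have "\<dots> \<cong> free_Abelian_group ((\<lambda>g. {frag_of g}) ` ?B)"
  proof (rule isomorphic_free_Abelian_groups[THEN iffD2])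
    have "inj_on (\<lambda>g. {frag_of g}) ?B"
      by (auto simp: inj_on_def frag_of_eq)
    then show "?B \<approx> (\<lambda>g. {frag_of g}) ` ?B"
      by (rule eqpoll_sym[OF inj_on_image_eqpoll_self])
  qed
  finally show ?thesis
    unfolding free_abelian_def by blast
qed

section \<open>Well-orders and the cardinal bounds \<open>card_le_aleph\<close>\<close>

lemma well_order_on_pullback:
  assumes wo: "well_order_on C r" and inj: "inj_on g A" and "g ` A \<subseteq> C"
  shows "well_order_on A {(x, y). x \<in> A \<and> y \<in> A \<and> (g x, g y) \<in> r}"
    (is "well_order_on A ?s")
proof -
  have refl: "refl_on C r" and "trans r" and "antisym r" and total: "total_on C r" and "wf (r - Id)"
    using wo by (auto simp: well_order_on_def linear_order_on_def partial_order_on_def preorder_on_def)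
  have "refl_on A ?s"
    using refl assms(3) by (auto simp: refl_on_def)
  moreover have "trans ?s"
    using \<open>trans r\<close> by (auto intro: transI dest: transD)
  moreover have "antisym ?s"
    using \<open>antisym r\<close> inj by (auto simp: antisym_def inj_on_def)
  moreover have "total_on A ?s"
  proof (rule total_onI)
    fix x y assume "x \<in> A" "y \<in> A" "x \<noteq> y"
    then have "g x \<noteq> g y"
      using inj by (auto dest: inj_onD)
    then show "(x, y) \<in> ?s \<or> (y, x) \<in> ?s"
      using total assms(3) \<open>x \<in> A\<close> \<open>y \<in> A\<close> by (auto simp: total_on_def)
  qed
  moreover have "?s \<subseteq> A \<times> A"
    by auto
  ultimately have "linear_order_on A ?s"
    by (simp add: linear_order_on_def partial_order_on_def preorder_on_def)
  moreover have "?s - Id \<subseteq> inv_image (r - Id) g"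
  proof
    fix p assume "p \<in> ?s - Id"
    then obtain x y where "p = (x, y)" "x \<in> A" "y \<in> A" "x \<noteq> y" "(g x, g y) \<in> r"
      by auto
    moreover from this have "g x \<noteq> g y"
      using inj by (auto dest: inj_onD)
    ultimately show "p \<in> inv_image (r - Id) g"
      by simp
  qed
  then have "wf (?s - Id)"
    by (rule wf_subset[OF wf_inv_image[OF \<open>wf (r - Id)\<close>]])
  ultimately show ?thesis
    by (simp add: well_order_on_def)
qed

lemma countable_imp_well_order_finite_underS:
  assumes "countable A"
  obtains r where "well_order_on A r" "\<And>a. finite (underS r a)"
proof
  let ?f = "to_nat_on A"
  let ?r = "{(x, y). x \<in> A \<and> y \<in> A \<and> (?f x, ?f y) \<in> {(m, n). m \<le> n}}"
  have inj: "inj_on ?f A"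
    using assms by (rule inj_on_to_nat_on)
  have "well_order_on (UNIV :: nat set) {(m, n). m \<le> n}"
    using natLeq_Well_order Field_natLeq by (simp add: natLeq_def)
  then show "well_order_on A ?r"
    using inj by (rule well_order_on_pullback) simp
  fix a
  have "?f ` underS ?r a \<subseteq> {..?f a}"
    by (auto simp: underS_def)
  moreover have "inj_on ?f (underS ?r a)"
    using inj by (rule inj_on_subset) (auto simp: underS_def)
  ultimately show "finite (underS ?r a)"
    using finite_subset finite_imageD by blast
qed

lemma card_le_aleph_inj_on:
  "card_le_aleph j C \<Longrightarrow> inj_on g A \<Longrightarrow> g ` A \<subseteq> C \<Longrightarrow> card_le_aleph j A"
proof (induction j arbitrary: A C g)
  case 0
  then show ?case
    by (metis card_le_aleph.simps(1) countable_image_inj_on countable_subset)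
next
  case (Suc j)
  obtain r where wo: "well_order_on C r" and small: "\<forall>c\<in>C. card_le_aleph j (underS r c)"
    using Suc.prems(1) by auto
  let ?s = "{(x, y). x \<in> A \<and> y \<in> A \<and> (g x, g y) \<in> r}"
  have "card_le_aleph j (underS ?s a)" if "a \<in> A" for a
  proof (rule Suc.IH)
    show "card_le_aleph j (underS r (g a))"
      using small Suc.prems(3) that by auto
    show "inj_on g (underS ?s a)"
      using Suc.prems(2) by (rule inj_on_subset) (auto simp: underS_def)
    show "g ` underS ?s a \<subseteq> underS r (g a)"
      using Suc.prems(2) that by (auto simp: underS_def inj_on_def)
  qed
  then show ?case
    using well_order_on_pullback[OF wo Suc.prems(2,3)] by auto
qed

lemma card_le_aleph_ordLeq:
  assumes "|A| \<le>o |B|" "card_le_aleph j B"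
  shows "card_le_aleph j A"
proof -
  obtain f where "inj_on f A" "f ` A \<subseteq> B"
    using card_of_ordLeq[THEN iffD2, OF assms(1)] by blast
  then show ?thesis
    by (rule card_le_aleph_inj_on[OF assms(2)])
qed

lemma countable_card_le_aleph: "countable A \<Longrightarrow> card_le_aleph j A"
proof (induction j arbitrary: A)
  case (Suc j)
  obtain r where "well_order_on A r" "\<And>a. finite (underS r a)"
    using countable_imp_well_order_finite_underS[OF Suc.prems] by blast
  with Suc.IH show ?case
    by (auto intro: countable_finite)
qed simp

lemma card_le_aleph_infinite_cases:
  assumes "card_le_aleph j A" and "finite A \<Longrightarrow> countable B" and "infinite A \<Longrightarrow> |B| \<le>o |A|"
  shows "card_le_aleph j B"
  using assms countable_card_le_aleph card_le_aleph_ordLeq by blast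

lemma card_le_aleph_image: "card_le_aleph j A \<Longrightarrow> card_le_aleph j (f ` A)"
  using card_le_aleph_ordLeq card_of_image by blast

lemma card_le_aleph_insert: "card_le_aleph j A \<Longrightarrow> card_le_aleph j (insert a A)"
  by (erule card_le_aleph_infinite_cases) (auto intro: countable_finite ordIso_imp_ordLeq infinite_card_of_insert)

lemma card_le_aleph_Times_finite:
  assumes "card_le_aleph j A" "finite K"
  shows "card_le_aleph j (A \<times> K)"
proof (rule card_le_aleph_infinite_cases[OF assms(1)])
  show "finite A \<Longrightarrow> countable (A \<times> K)"
    using assms(2) by (auto intro: countable_finite)
  assume "infinite A"
  show "|A \<times> K| \<le>o |A|"
  proof (cases "K = {}")
    case False
    have "|K| \<le>o |A|"
      using \<open>infinite A\<close> assms(2) by (intro ordLess_imp_ordLeq finite_ordLess_infinite2) auto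
    with \<open>infinite A\<close> False show ?thesis
      by (rule ordIso_imp_ordLeq[OF card_of_Times_infinite_simps(1)])
  qed (simp add: card_of_empty)
qed

lemma card_le_aleph_lists: "card_le_aleph j A \<Longrightarrow> card_le_aleph j (lists A)"
  by (erule card_le_aleph_infinite_cases) (auto intro: countable_finite ordIso_imp_ordLeq)

lemma linear_order_on_finite_has_greatest:
  assumes lin: "linear_order_on A r" and "finite K" "K \<noteq> {}" "K \<subseteq> A"
  shows "\<exists>g\<in>K. \<forall>x\<in>K. (x, g) \<in> r"
  using assms(2-4)
proof (induction K rule: finite_ne_induct)
  case (singleton x)
  then show ?case
    using lin by (auto simp: linear_order_on_def partial_order_on_def preorder_on_def refl_on_def)
next
  case (insert x K)
  then obtain g where g: "g \<in> K" "\<forall>y\<in>K. (y, g) \<in> r" by auto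
  have "(x, g) \<in> r \<or> (g, x) \<in> r"
    using lin insert.prems g(1)
    by (cases "x = g") (auto simp: linear_order_on_def partial_order_on_def preorder_on_def refl_on_def total_on_def)
  then show ?case
  proof
    assume "(g, x) \<in> r"
    then have "\<forall>y\<in>K. (y, x) \<in> r"
      using g(2) lin by (meson linear_order_on_def order_on_defs(1) transD partial_order_on_def)
    moreover have "(x, x) \<in> r"
      using lin insert.prems by (auto simp: linear_order_on_def partial_order_on_def preorder_on_def refl_on_def)
    ultimately show ?case by blast
  qed (use g in blast)
qed

lemma card_le_aleph_subset: "A \<subseteq> B \<Longrightarrow> card_le_aleph j B \<Longrightarrow> card_le_aleph j A"
  by (rule card_le_aleph_inj_on[of j B id]) auto

definition lex_fibres :: "'a rel \<Rightarrow> ('b \<Rightarrow> 'a) \<Rightarrow> ('a \<Rightarrow> 'b rel) \<Rightarrow> 'b set \<Rightarrow> 'b rel" where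
  "lex_fibres r key s L =
    {(x, y). x \<in> L \<and> y \<in> L \<and> (key x \<in> underS r (key y) \<or> key x = key y \<and> (x, y) \<in> s (key x))}"

lemma trans_lex_fibres:
  assumes "trans r" "antisym r" and "\<And>x. x \<in> L \<Longrightarrow> trans (s (key x))"
  shows "trans (lex_fibres r key s L)"
proof (rule transI)
  fix x y z assume xy: "(x, y) \<in> lex_fibres r key s L" and yz: "(y, z) \<in> lex_fibres r key s L"
  then have "trans (s (key z))"
    using assms(3) by (auto simp: lex_fibres_def)
  with xy yz assms(1,2) show "(x, z) \<in> lex_fibres r key s L"
    by (auto simp: lex_fibres_def underS_def antisym_def dest: transD)
qed

lemma antisym_lex_fibres:
  assumes "antisym r" and "\<And>x. x \<in> L \<Longrightarrow> antisym (s (key x))"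
  shows "antisym (lex_fibres r key s L)"
proof (rule antisymI)
  fix x y assume xy: "(x, y) \<in> lex_fibres r key s L" and yx: "(y, x) \<in> lex_fibres r key s L"
  show "x = y"
  proof (cases "key x = key y")
    case True
    then have "(x, y) \<in> s (key x)" "(y, x) \<in> s (key x)" "antisym (s (key x))"
      using xy yx assms(2) by (auto simp: lex_fibres_def underS_def)
    then show ?thesis
      by (simp add: antisym_def)
  next
    case False
    then have "(key x, key y) \<in> r" "(key y, key x) \<in> r"
      using xy yx by (auto simp: lex_fibres_def underS_def)
    with False assms(1) show ?thesis
      by (simp add: antisym_def)
  qed
qed

lemma linear_order_on_lex_fibres:
  assumes r: "linear_order_on A r" and key: "\<And>x. x \<in> L \<Longrightarrow> key x \<in> A"
    and s: "\<And>a. a \<in> A \<Longrightarrow> linear_order_on {x \<in> L. key x = a} (s a)"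
  shows "linear_order_on L (lex_fibres r key s L)"
proof -
  let ?t = "lex_fibres r key s L"
  have "refl_on L ?t"
    using s key by (auto simp: lex_fibres_def linear_order_on_def partial_order_on_def
        preorder_on_def refl_on_def)
  moreover have "trans ?t" "antisym ?t"
  proof -
    have "trans r" "antisym r"
      using r by (simp_all add: linear_order_on_def partial_order_on_def preorder_on_def)
    moreover have "trans (s (key x))" "antisym (s (key x))" if "x \<in> L" for x
      using s[OF key[OF that]] by (simp_all add: linear_order_on_def partial_order_on_def preorder_on_def)
    ultimately show "trans ?t" "antisym ?t"
      by (simp_all add: trans_lex_fibres antisym_lex_fibres)
  qed
  moreover have "total_on L ?t"
  proof (rule total_onI)
    fix x y assume "x \<in> L" "y \<in> L" "x \<noteq> y"
    show "(x, y) \<in> ?t \<or> (y, x) \<in> ?t"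
    proof (cases "key x = key y")
      case True
      have "total_on {z \<in> L. key z = key x} (s (key x))"
        using s key \<open>x \<in> L\<close> by (simp add: linear_order_on_def)
      with True \<open>x \<in> L\<close> \<open>y \<in> L\<close> \<open>x \<noteq> y\<close> show ?thesis
        by (auto simp: lex_fibres_def total_on_def)
    next
      case False
      with r key \<open>x \<in> L\<close> \<open>y \<in> L\<close> show ?thesis
        by (auto simp: lex_fibres_def linear_order_on_def total_on_def underS_def)
    qed
  qed
  moreover have "?t \<subseteq> L \<times> L"
    by (auto simp: lex_fibres_def)
  ultimately show ?thesis
    by (simp add: linear_order_on_def partial_order_on_def preorder_on_def)
qed

lemma wf_lex_fibres:
  assumes "wf (r - Id)" and "\<And>a. a \<in> A \<Longrightarrow> wf (s a - Id)" and key: "\<And>x. x \<in> L \<Longrightarrow> key x \<in> A"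
    and fibre: "\<And>a. a \<in> A \<Longrightarrow> s a \<subseteq> {x \<in> L. key x = a} \<times> {x \<in> L. key x = a}"
  shows "wf (lex_fibres r key s L - Id)"
proof (rule wf_subset)
  let ?S = "\<Union>a\<in>A. s a - Id"
  have "wf ?S"
  proof (rule wf_UN)
    show "wf (s a - Id)" if "a \<in> A" for a
      using assms(2)[OF that] .
    show "Domain (s a - Id) \<inter> Range (s b - Id) = {}" if "a \<in> A" "b \<in> A" "s a - Id \<noteq> s b - Id" for a b
    proof -
      have "Domain (s a - Id) \<subseteq> {x. key x = a}" "Range (s b - Id) \<subseteq> {x. key x = b}"
        using fibre[OF that(1)] fibre[OF that(2)] by auto
      moreover have "a \<noteq> b"
        using that(3) by auto
      ultimately show ?thesis
        by auto
    qed
  qed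
  then show "wf (inv_image ((r - Id) <*lex*> ?S) (\<lambda>x. (key x, x)))"
    using assms(1) by (intro wf_inv_image wf_lex_prod)
  show "lex_fibres r key s L - Id \<subseteq> inv_image ((r - Id) <*lex*> ?S) (\<lambda>x. (key x, x))"
    using key by (auto simp: lex_fibres_def underS_def)
qed

lemma well_order_on_lex_fibres:
  assumes "well_order_on A r" and "\<And>x. x \<in> L \<Longrightarrow> key x \<in> A"
    and "\<And>a. a \<in> A \<Longrightarrow> well_order_on {x \<in> L. key x = a} (s a)"
  shows "well_order_on L (lex_fibres r key s L)"
  using assms linear_order_on_lex_fibres[of A r L key s] wf_lex_fibres[of r A s L key]
  by (auto simp: well_order_on_def linear_order_on_def partial_order_on_def preorder_on_def)

section \<open>Freeness of small sets of tuples\<close>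

definition comb_free_within :: "((nat \<Rightarrow> 's) list \<Rightarrow> nat set) \<Rightarrow> (nat \<Rightarrow> 's) list set \<Rightarrow> bool" where
  "comb_free_within F \<Lambda> \<longleftrightarrow>
     (\<exists>r. well_order_on \<Lambda> r \<and>
        (\<forall>\<eta>\<in>\<Lambda>. \<exists>m\<in>F \<eta>. \<exists>n. tup_restr \<eta> m n \<notin> (\<lambda>\<nu>. tup_restr \<nu> m n) ` underS r \<eta>))"

lemma comb_free_iff_within: "comb_free k \<Lambda> \<longleftrightarrow> comb_free_within (\<lambda>_. {..k}) \<Lambda>"
  by (simp add: comb_free_def comb_free_within_def Bex_def)

lemma comb_free_within_mono:
  "comb_free_within F' \<Lambda> \<Longrightarrow> (\<And>\<eta>. \<eta> \<in> \<Lambda> \<Longrightarrow> F' \<eta> \<subseteq> F \<eta>) \<Longrightarrow> comb_free_within F \<Lambda>"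
  unfolding comb_free_within_def by (meson subsetD)

lemma eventually_tup_restr_ne:
  assumes "\<nu> \<noteq> \<eta>" "m < length \<eta>"
  shows "\<forall>\<^sub>F n in sequentially. tup_restr \<nu> m n \<noteq> tup_restr \<eta> m n"
proof (cases "length \<nu> = length \<eta>")
  case True
  then obtain l where l: "l < length \<eta>" "\<nu> ! l \<noteq> \<eta> ! l"
    using assms(1) by (metis nth_equalityI)
  then obtain i where i: "(\<nu> ! l) i \<noteq> (\<eta> ! l) i"
    by (auto simp: fun_eq_iff)
  have "tup_restr \<nu> m n \<noteq> tup_restr \<eta> m n" if "i < n" for n
  proof
    assume "tup_restr \<nu> m n = tup_restr \<eta> m n"
    then have "tup_restr \<nu> m n ! l = tup_restr \<eta> m n ! l" by simp
    with l(1) i True that show False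
      by (auto simp: nth_tup_restr seq_restr_eq_iff split: if_splits)
  qed
  then show ?thesis
    by (auto simp: eventually_sequentially intro: exI[of _ "Suc i"])
next
  case False
  then have "tup_restr \<nu> m n \<noteq> tup_restr \<eta> m n" for n
    by (metis length_tup_restr)
  then show ?thesis
    by simp
qed

lemma comb_free_within_if_countable:
  assumes "countable \<Lambda>" and coord: "\<And>\<eta>. \<eta> \<in> \<Lambda> \<Longrightarrow> \<exists>m\<in>F \<eta>. m < length \<eta>"
  shows "comb_free_within F \<Lambda>"
proof -
  obtain r where wo: "well_order_on \<Lambda> r" and fin: "\<And>\<eta>. finite (underS r \<eta>)"
    using countable_imp_well_order_finite_underS[OF assms(1)] by blast
  have "\<exists>m\<in>F \<eta>. \<exists>n. tup_restr \<eta> m n \<notin> (\<lambda>\<nu>. tup_restr \<nu> m n) ` underS r \<eta>" if \<eta>: "\<eta> \<in> \<Lambda>" for \<eta>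
  proof -
    obtain m where m: "m \<in> F \<eta>" "m < length \<eta>"
      using coord[OF \<eta>] by blast
    have "\<forall>\<nu>\<in>underS r \<eta>. \<forall>\<^sub>F n in sequentially. tup_restr \<nu> m n \<noteq> tup_restr \<eta> m n"
    proof
      fix \<nu> assume "\<nu> \<in> underS r \<eta>"
      then have "\<nu> \<noteq> \<eta>"
        using underS_notIn by metis
      then show "\<forall>\<^sub>F n in sequentially. tup_restr \<nu> m n \<noteq> tup_restr \<eta> m n"
        using m(2) by (rule eventually_tup_restr_ne)
    qed
    then have "\<forall>\<^sub>F n in sequentially. \<forall>\<nu>\<in>underS r \<eta>. tup_restr \<nu> m n \<noteq> tup_restr \<eta> m n"
      by (rule eventually_ball_finite[OF fin])
    then obtain n where "\<forall>\<nu>\<in>underS r \<eta>. tup_restr \<nu> m n \<noteq> tup_restr \<eta> m n"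
      by (auto simp: eventually_sequentially)
    then have "tup_restr \<eta> m n \<notin> (\<lambda>\<nu>. tup_restr \<nu> m n) ` underS r \<eta>"
      by auto
    with m(1) show ?thesis
      by blast
  qed
  with wo show ?thesis
    by (auto simp: comb_free_within_def)
qed

lemma comb_free_within_fibres:
  assumes wo: "well_order_on A r" and key: "\<And>\<eta>. \<eta> \<in> \<Lambda> \<Longrightarrow> key \<eta> \<in> A"
    and fibres: "\<And>\<tau>. \<tau> \<in> A \<Longrightarrow> comb_free_within F {\<eta> \<in> \<Lambda>. key \<eta> = \<tau>}"
    and separated: "\<And>\<eta> \<nu> m n. \<lbrakk>\<eta> \<in> \<Lambda>; \<nu> \<in> \<Lambda>; key \<nu> \<in> underS r (key \<eta>); m \<in> F \<eta>\<rbrakk>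
      \<Longrightarrow> tup_restr \<nu> m n \<noteq> tup_restr \<eta> m n"
  shows "comb_free_within F \<Lambda>"
proof -
  have "\<forall>\<tau>\<in>A. \<exists>s. well_order_on {\<eta> \<in> \<Lambda>. key \<eta> = \<tau>} s \<and> (\<forall>\<eta>\<in>{\<eta> \<in> \<Lambda>. key \<eta> = \<tau>}.
      \<exists>m\<in>F \<eta>. \<exists>n. tup_restr \<eta> m n \<notin> (\<lambda>\<nu>. tup_restr \<nu> m n) ` underS s \<eta>)"
    using fibres by (simp add: comb_free_within_def)
  then obtain s where s: "\<forall>\<tau>\<in>A. well_order_on {\<eta> \<in> \<Lambda>. key \<eta> = \<tau>} (s \<tau>) \<and> (\<forall>\<eta>\<in>{\<eta> \<in> \<Lambda>. key \<eta> = \<tau>}.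
      \<exists>m\<in>F \<eta>. \<exists>n. tup_restr \<eta> m n \<notin> (\<lambda>\<nu>. tup_restr \<nu> m n) ` underS (s \<tau>) \<eta>)"
    by (rule bchoice[THEN exE])
  let ?r = "lex_fibres r key s \<Lambda>"
  have "well_order_on \<Lambda> ?r"
  proof (rule well_order_on_lex_fibres[OF wo key])
    fix \<tau> assume "\<tau> \<in> A"
    then show "well_order_on {\<eta> \<in> \<Lambda>. key \<eta> = \<tau>} (s \<tau>)"
      using s by blast
  qed
  moreover have "\<exists>m\<in>F \<eta>. \<exists>n. tup_restr \<eta> m n \<notin> (\<lambda>\<nu>. tup_restr \<nu> m n) ` underS ?r \<eta>"
    if \<eta>: "\<eta> \<in> \<Lambda>" for \<eta>
  proof -
    obtain m n where m: "m \<in> F \<eta>"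
      and new: "tup_restr \<eta> m n \<notin> (\<lambda>\<nu>. tup_restr \<nu> m n) ` underS (s (key \<eta>)) \<eta>"
      using s key[OF \<eta>] \<eta> by blast
    have "tup_restr \<nu> m n \<noteq> tup_restr \<eta> m n" if \<nu>: "\<nu> \<in> underS ?r \<eta>" for \<nu>
    proof (cases "key \<nu> = key \<eta>")
      case True
      then have "\<nu> \<in> underS (s (key \<eta>)) \<eta>"
        using \<nu> by (auto simp: underS_def lex_fibres_def)
      with new show ?thesis
        by (metis image_eqI)
    next
      case False
      then have "key \<nu> \<in> underS r (key \<eta>)" "\<nu> \<in> \<Lambda>"
        using \<nu> by (auto simp: underS_def lex_fibres_def)
      with \<eta> m show ?thesis
        by (intro separated)
    qed
    then have "tup_restr \<eta> m n \<notin> (\<lambda>\<nu>. tup_restr \<nu> m n) ` underS ?r \<eta>"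
      by (metis (no_types, lifting) imageE)
    with m show ?thesis
      by blast
  qed
  ultimately show ?thesis
    unfolding comb_free_within_def by blast
qed

lemma occurrence_key:
  assumes wo: "well_order_on \<Lambda> r" and len: "\<And>\<eta>. \<eta> \<in> \<Lambda> \<Longrightarrow> length \<eta> = Suc k"
  obtains key lc where "\<And>\<eta>. \<eta> \<in> \<Lambda> \<Longrightarrow> key \<eta> \<in> \<Lambda> \<and> lc \<eta> \<le> k"
    and "\<And>\<eta> x. \<eta> \<in> \<Lambda> \<Longrightarrow> x \<in> set \<eta> \<Longrightarrow> \<exists>t\<in>\<Lambda>. (t, key \<eta>) \<in> r \<and> x \<in> set t"
    and "\<And>\<eta> \<nu>. \<eta> \<in> \<Lambda> \<Longrightarrow> \<nu> \<in> \<Lambda> \<Longrightarrow> \<nu> ! lc \<eta> = \<eta> ! lc \<eta> \<Longrightarrow> (key \<eta>, key \<nu>) \<in> r"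
proof -
  have "wo_rel r"
    using wo well_order_on_Field unfolding wo_rel_def by metis
  have field: "Field r = \<Lambda>"
    using wo well_order_on_Field by metis
  define first where "first x = wo_rel.minim r {t \<in> \<Lambda>. x \<in> set t}" for x
  have first: "first x \<in> \<Lambda> \<and> x \<in> set (first x) \<and> (first x, t) \<in> r" if "t \<in> \<Lambda>" "x \<in> set t" for x t
    using wo_rel.minim_in[OF \<open>wo_rel r\<close>, of "{t \<in> \<Lambda>. x \<in> set t}"]
      wo_rel.minim_least[OF \<open>wo_rel r\<close>, of "{t \<in> \<Lambda>. x \<in> set t}" t] that
    by (auto simp: first_def field)
  have coord: "\<eta> ! l \<in> set \<eta>" if "\<eta> \<in> \<Lambda>" "l \<le> k" for \<eta> l
    using that len by (simp add: less_Suc_eq_le)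
  have "\<exists>l\<le>k. \<forall>l'\<le>k. (first (\<eta> ! l'), first (\<eta> ! l)) \<in> r" if \<eta>: "\<eta> \<in> \<Lambda>" for \<eta>
  proof -
    have "linear_order_on \<Lambda> r"
      using wo by (simp add: well_order_on_def)
    moreover have "(\<lambda>l. first (\<eta> ! l)) ` {..k} \<subseteq> \<Lambda>"
      using first[OF \<eta> coord[OF \<eta>]] by auto
    ultimately show ?thesis
      using linear_order_on_finite_has_greatest[of \<Lambda> r "(\<lambda>l. first (\<eta> ! l)) ` {..k}"] by auto
  qed
  then obtain lc where lc: "\<And>\<eta>. \<eta> \<in> \<Lambda> \<Longrightarrow> lc \<eta> \<le> k"
    and last: "\<And>\<eta> l. \<eta> \<in> \<Lambda> \<Longrightarrow> l \<le> k \<Longrightarrow> (first (\<eta> ! l), first (\<eta> ! lc \<eta>)) \<in> r"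
    by metis
  show ?thesis
  proof (rule that[of "\<lambda>\<eta>. first (\<eta> ! lc \<eta>)" lc])
    fix \<eta> assume "\<eta> \<in> \<Lambda>"
    then show "first (\<eta> ! lc \<eta>) \<in> \<Lambda> \<and> lc \<eta> \<le> k"
      using first[OF \<open>\<eta> \<in> \<Lambda>\<close> coord] lc by blast
  next
    fix \<eta> x assume \<eta>: "\<eta> \<in> \<Lambda>" and "x \<in> set \<eta>"
    then obtain l where "l \<le> k" "x = \<eta> ! l"
      using len by (auto simp: in_set_conv_nth less_Suc_eq_le)
    then show "\<exists>t\<in>\<Lambda>. (t, first (\<eta> ! lc \<eta>)) \<in> r \<and> x \<in> set t"
      using first[OF \<eta> \<open>x \<in> set \<eta>\<close>] last[OF \<eta>] by blast
  next
    fix \<eta> \<nu> assume "\<eta> \<in> \<Lambda>" "\<nu> \<in> \<Lambda>" "\<nu> ! lc \<eta> = \<eta> ! lc \<eta>"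
    then show "(first (\<eta> ! lc \<eta>), first (\<nu> ! lc \<nu>)) \<in> r"
      using last[OF \<open>\<nu> \<in> \<Lambda>\<close> lc[OF \<open>\<eta> \<in> \<Lambda>\<close>]] by simp
  qed
qed

lemma card_le_aleph_coordinates_below:
  assumes small: "card_le_aleph j (underS r \<tau>)"
    and below: "\<And>\<eta> x. \<eta> \<in> B \<Longrightarrow> x \<in> set \<eta> \<Longrightarrow> \<exists>t. (t, \<tau>) \<in> r \<and> length t = Suc k \<and> x \<in> set t"
  shows "card_le_aleph j B"
proof (rule card_le_aleph_subset)
  let ?D = "(\<lambda>(t, c). t ! c) ` (insert \<tau> (underS r \<tau>) \<times> {..k})"
  show "B \<subseteq> lists ?D"
  proof (intro subsetI in_listsI ballI)
    fix \<eta> x assume "\<eta> \<in> B" "x \<in> set \<eta>"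
    then obtain t where t: "(t, \<tau>) \<in> r" "length t = Suc k" "x \<in> set t"
      using below by blast
    then obtain c where "c \<le> k" "x = t ! c"
      by (auto simp: in_set_conv_nth less_Suc_eq_le)
    with t(1) show "x \<in> ?D"
      by (auto simp: underS_def)
  qed
  show "card_le_aleph j (lists ?D)"
    using small
    by (intro card_le_aleph_lists card_le_aleph_image card_le_aleph_Times_finite card_le_aleph_insert) auto
qed

lemma comb_free_within_by_keys:
  assumes wo: "well_order_on \<Lambda> r" and len: "\<And>\<eta>. \<eta> \<in> \<Lambda> \<Longrightarrow> length \<eta> = Suc k"
    and key: "\<And>\<eta>. \<eta> \<in> \<Lambda> \<Longrightarrow> key \<eta> \<in> \<Lambda> \<and> lc \<eta> \<le> k"
    and key_shared: "\<And>\<eta> \<nu>. \<eta> \<in> \<Lambda> \<Longrightarrow> \<nu> \<in> \<Lambda> \<Longrightarrow> \<nu> ! lc \<eta> = \<eta> ! lc \<eta> \<Longrightarrow> (key \<eta>, key \<nu>) \<in> r"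
    and fibres: "\<And>\<tau>. \<tau> \<in> \<Lambda> \<Longrightarrow> comb_free_within (\<lambda>\<eta>. F \<eta> - {lc \<eta>}) {\<eta> \<in> \<Lambda>. key \<eta> = \<tau>}"
  shows "comb_free_within F \<Lambda>"
proof -
  have "comb_free_within (\<lambda>\<eta>. F \<eta> - {lc \<eta>}) \<Lambda>"
  proof (rule comb_free_within_fibres[OF wo _ fibres])
    show "key \<eta> \<in> \<Lambda>" if "\<eta> \<in> \<Lambda>" for \<eta>
      using key that by blast
    fix \<eta> \<nu> m n
    assume \<eta>: "\<eta> \<in> \<Lambda>" and \<nu>: "\<nu> \<in> \<Lambda>" and earlier: "key \<nu> \<in> underS r (key \<eta>)"
      and m: "m \<in> F \<eta> - {lc \<eta>}"
    show "tup_restr \<nu> m n \<noteq> tup_restr \<eta> m n"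
    proof
      assume "tup_restr \<nu> m n = tup_restr \<eta> m n"
      then have "\<nu> ! lc \<eta> = \<eta> ! lc \<eta>"
        using m key[OF \<eta>] len[OF \<eta>] by (intro nth_eq_if_tup_restr_eq) auto
      with earlier key_shared[OF \<eta> \<nu>] wo show False
        by (auto simp: underS_def well_order_on_def linear_order_on_def partial_order_on_def antisym_def)
    qed
  qed
  then show ?thesis
    by (rule comb_free_within_mono) auto
qed

lemma comb_free_within_if_card_le_aleph:
  assumes "card_le_aleph j \<Lambda>" and "\<And>\<eta>. \<eta> \<in> \<Lambda> \<Longrightarrow> length \<eta> = Suc k"
    and "\<And>\<eta>. \<eta> \<in> \<Lambda> \<Longrightarrow> F \<eta> \<subseteq> {..k} \<and> j < card (F \<eta>)"
  shows "comb_free_within F \<Lambda>"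
  using assms
proof (induction j arbitrary: \<Lambda> F)
  case 0
  show ?case
  proof (rule comb_free_within_if_countable)
    show "countable \<Lambda>"
      using "0.prems"(1) by simp
    fix \<eta> assume "\<eta> \<in> \<Lambda>"
    then have "F \<eta> \<subseteq> {..k}" "F \<eta> \<noteq> {}"
      using "0.prems"(3) by fastforce+
    then show "\<exists>m\<in>F \<eta>. m < length \<eta>"
      using "0.prems"(2)[OF \<open>\<eta> \<in> \<Lambda>\<close>] by fastforce
  qed
next
  case (Suc j)
  note len = Suc.prems(2)
  obtain r where wo: "well_order_on \<Lambda> r" and small: "\<forall>\<tau>\<in>\<Lambda>. card_le_aleph j (underS r \<tau>)"
    using Suc.prems(1) by auto
  obtain key lc where key: "\<And>\<eta>. \<eta> \<in> \<Lambda> \<Longrightarrow> key \<eta> \<in> \<Lambda> \<and> lc \<eta> \<le> k"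
    and key_below: "\<And>\<eta> x. \<eta> \<in> \<Lambda> \<Longrightarrow> x \<in> set \<eta> \<Longrightarrow> \<exists>t\<in>\<Lambda>. (t, key \<eta>) \<in> r \<and> x \<in> set t"
    and key_shared: "\<And>\<eta> \<nu>. \<eta> \<in> \<Lambda> \<Longrightarrow> \<nu> \<in> \<Lambda> \<Longrightarrow> \<nu> ! lc \<eta> = \<eta> ! lc \<eta> \<Longrightarrow> (key \<eta>, key \<nu>) \<in> r"
    using occurrence_key[OF wo len] by blast
  show ?case
  proof (rule comb_free_within_by_keys[OF wo len key key_shared])
    fix \<tau> assume "\<tau> \<in> \<Lambda>"
    show "comb_free_within (\<lambda>\<eta>. F \<eta> - {lc \<eta>}) {\<eta> \<in> \<Lambda>. key \<eta> = \<tau>}"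
    proof (rule Suc.IH)
      show "card_le_aleph j {\<eta> \<in> \<Lambda>. key \<eta> = \<tau>}"
      proof (rule card_le_aleph_coordinates_below)
        show "card_le_aleph j (underS r \<tau>)"
          using small \<open>\<tau> \<in> \<Lambda>\<close> by blast
        fix \<eta> x assume "\<eta> \<in> {\<eta> \<in> \<Lambda>. key \<eta> = \<tau>}" "x \<in> set \<eta>"
        then obtain t where "t \<in> \<Lambda>" "(t, \<tau>) \<in> r" "x \<in> set t"
          using key_below by blast
        then show "\<exists>t. (t, \<tau>) \<in> r \<and> length t = Suc k \<and> x \<in> set t"
          using len by blast
      qed
    next
      fix \<eta> assume "\<eta> \<in> {\<eta> \<in> \<Lambda>. key \<eta> = \<tau>}"
      then have "F \<eta> \<subseteq> {..k}" "Suc j < card (F \<eta>)"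
        using Suc.prems(3) by auto
      moreover from this have "card (F \<eta>) - 1 \<le> card (F \<eta> - {lc \<eta>})"
        by (simp add: card_Diff_singleton_if finite_subset)
      ultimately show "F \<eta> - {lc \<eta>} \<subseteq> {..k} \<and> j < card (F \<eta> - {lc \<eta>})"
        by auto
    qed (use len in auto)
  qed
qed

theorem claim1p13:
  fixes k :: nat and S :: "'s set" and \<Lambda> :: "(nat \<Rightarrow> 's) list set"
    and a :: "(nat \<Rightarrow> 's) list \<Rightarrow> nat \<Rightarrow> int"
  assumes "comb_param k S \<Lambda>"
  shows "aleph_Suc_free k \<Lambda> \<and> (comb_free k \<Lambda> \<longrightarrow> free_abelian (G_x k \<Lambda> a))"
proof
  have len: "\<And>\<eta>. \<eta> \<in> \<Lambda> \<Longrightarrow> length \<eta> = Suc k"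
    using assms by (simp add: comb_param_def)
  show "aleph_Suc_free k \<Lambda>"
    unfolding aleph_Suc_free_def comb_free_iff_within
  proof (intro allI impI)
    fix \<Lambda>' assume "\<Lambda>' \<subseteq> \<Lambda> \<and> card_le_aleph k \<Lambda>'"
    with len show "comb_free_within (\<lambda>_. {..k}) \<Lambda>'"
      by (intro comb_free_within_if_card_le_aleph[of k]) auto
  qed
  show "comb_free k \<Lambda> \<longrightarrow> free_abelian (G_x k \<Lambda> a)"
    using free_abelian_G_x len by blast
qed

end
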